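(* Let $q=3^k$ for a positive integer $k$, let $n$ be a positive integer and $j\in\{0,1,\dots,n\}$. Let $A\subseteq \mathbb{F}_q^n$ be a set such that every element of $A$ has exactly $j$ coordinates equal to zero, and such that for any three distinct elements $x,y,z\in A$ we have $xy+yz+zx\neq 0$ in $\mathbb{F}_q^n$ (coordinatewise products). Define $$P(x,y,z)=\prod_{i=1}^{n} \left(1-(x_iy_i+y_iz_i+z_ix_i)^{q-1}\right)\in\mathbb{F}_q.$$ Then for $x,y,z\in A$, $P(x,y,z)\neq 0$ if and only if $x=y=z$.
   Context: For $x\in\mathbb{F}_q^n$, $x_i$ denotes its $i$-th coordinate. *)

theory Defs
  imports "HOL-Analysis.Finite_Cartesian_Product"
begin

definition vmul :: "'a::field ^ 'n \<Rightarrow> 'a ^ 'n \<Rightarrow> 'a ^ 'n" where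
  "vmul x y = (\<chi> i. x $ i * y $ i)"

definition Ppoly :: "nat \<Rightarrow> 'a::field ^ 'n \<Rightarrow> 'a ^ 'n \<Rightarrow> 'a ^ 'n \<Rightarrow> 'a" where
  "Ppoly q x y z = (\<Prod>i\<in>UNIV. 1 - (x $ i * y $ i + y $ i * z $ i + z $ i * x $ i) ^ (q - 1))"

end

theory Submission
  imports Defs "HOL-Number_Theory.Number_Theory"
begin

text \<open>
  Over \<open>F\<^sub>q\<close> the map \<open>a \<mapsto> 1 - a\<^sup>q\<^sup>-\<^sup>1\<close> is the indicator of \<open>a = 0\<close>, so \<open>P(x,y,z) \<noteq> 0\<close>
  exactly when \<open>xy + yz + zx = 0\<close>. For three distinct points of \<open>A\<close> this is excluded by hypothesis.
  If two of them coincide, say the points are \<open>x, x, z\<close>, then in characteristic 3 the condition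
  reads \<open>x\<^sub>i(x\<^sub>i - z\<^sub>i) = 0\<close> for every \<open>i\<close>: so \<open>x\<close> agrees with \<open>z\<close> off the zero set of \<open>x\<close>, whence the
  zero set of \<open>z\<close> is contained in that of \<open>x\<close>. Both have \<open>j\<close> elements, so they are equal and
  \<open>x = z\<close>.
\<close>

lemma power_card_minus_one_eq_1:
  fixes x :: "'a::{field,finite}"
  assumes "x \<noteq> 0"
  shows "x ^ (CARD('a) - 1) = 1"
proof -
  have card_units: "card (UNIV - {0::'a}) = CARD('a) - 1"
    by (simp add: card_Diff_subset)
  have "(\<Prod>y\<in>UNIV-{0}. y) = (\<Prod>y\<in>UNIV-{0::'a}. x * y)"
    by (rule prod.reindex_bij_witness[of _ "\<lambda>y. x * y" "\<lambda>y. y / x"]) (use assms in auto)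
  also have "\<dots> = x ^ (CARD('a) - 1) * (\<Prod>y\<in>UNIV-{0}. y)"
    by (simp add: prod.distrib card_units)
  finally show ?thesis
    by simp
qed

lemma power_card_minus_one:
  fixes x :: "'a::{field,finite}"
  shows "x ^ (CARD('a) - 1) = (if x = 0 then 0 else 1)"
proof (cases "x = 0")
  case True
  have "card {0::'a, 1} \<le> CARD('a)"
    by (rule card_mono) auto
  then have "CARD('a) - 1 > 0"
    by simp
  with True show ?thesis
    by simp
next
  case False
  then show ?thesis
    using power_card_minus_one_eq_1 by simp
qed

lemma CHAR_eq_if_card_prime_power:
  assumes "prime p" and "CARD('a::{field,finite}) = p ^ k" and "k > 0"
  shows "CHAR('a) = p"
proof -
  have "prime CHAR('a)"
    by (simp add: prime_CHAR_semidom finite_imp_CHAR_pos)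
  moreover have "CHAR('a) dvd p ^ k"
    using CHAR_dvd_CARD[where 'a='a] assms(2) by simp
  ultimately show ?thesis
    using assms(1) prime_dvd_power_nat primes_dvd_imp_eq by blast
qed

lemma Ppoly_card_neq_0_iff:
  fixes x y z :: "'a::{field,finite} ^ 'n"
  shows "Ppoly CARD('a) x y z \<noteq> 0 \<longleftrightarrow> vmul x y + vmul y z + vmul z x = 0"
proof -
  have "Ppoly CARD('a) x y z =
      (\<Prod>i\<in>UNIV. if x $ i * y $ i + y $ i * z $ i + z $ i * x $ i = 0 then 1 else 0)"
    unfolding Ppoly_def by (intro prod.cong refl) (subst power_card_minus_one, simp)
  also have "\<dots> \<noteq> 0 \<longleftrightarrow> (\<forall>i. x $ i * y $ i + y $ i * z $ i + z $ i * x $ i = 0)"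
    by (simp add: prod_zero_iff)
  also have "\<dots> \<longleftrightarrow> vmul x y + vmul y z + vmul z x = 0"
    by (simp add: vmul_def vec_eq_iff)
  finally show ?thesis .
qed

lemma vmul_commute: "vmul x y = vmul y x"
  by (simp add: vmul_def mult.commute)

lemma vmul_self_cyclic_sum_eq_0_iff:
  fixes x z :: "'a::field ^ 'n"
  assumes "(3::'a) = 0"
  shows "vmul x x + vmul x z + vmul z x = 0 \<longleftrightarrow> (\<forall>i. x $ i = 0 \<or> x $ i = z $ i)"
proof -
  have "a * a + a * b + b * a = a * (a - b) + 3 * a * b" for a b :: 'a
    by (simp add: algebra_simps)
  then have "a * a + a * b + b * a = 0 \<longleftrightarrow> a = 0 \<or> a = b" for a b :: 'a
    using assms by simp
  then show ?thesis
    by (simp add: vmul_def vec_eq_iff)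
qed

lemma vec_eq_if_agree_off_zeros:
  fixes x z :: "'a::zero ^ 'n::finite"
  assumes "card {i. x $ i = 0} = card {i. z $ i = 0}"
    and "\<forall>i. x $ i = 0 \<or> x $ i = z $ i"
  shows "x = z"
proof -
  have "{i. z $ i = 0} \<subseteq> {i. x $ i = 0}"
    using assms(2) by force
  then have "{i. z $ i = 0} = {i. x $ i = 0}"
    using assms(1) by (intro card_subset_eq) auto
  then show ?thesis
    using assms(2) by (metis (mono_tags) mem_Collect_eq vec_eq_iff)
qed

lemma vmul_cyclic_sum_eq_0_iff_eq:
  fixes x y z :: "'a::field ^ 'n::finite"
  assumes "(3::'a) = 0"
    and "card {i. x $ i = 0} = card {i. y $ i = 0}"
    and "card {i. y $ i = 0} = card {i. z $ i = 0}"
    and "x = y \<or> y = z \<or> x = z"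
  shows "vmul x y + vmul y z + vmul z x = 0 \<longleftrightarrow> x = y \<and> y = z"
proof -
  have pair: "vmul u u + vmul u v + vmul v u = 0 \<longleftrightarrow> u = v"
    if "card {i. u $ i = 0} = card {i. v $ i = 0}" for u v :: "'a ^ 'n"
    using that vmul_self_cyclic_sum_eq_0_iff[OF assms(1)] vec_eq_if_agree_off_zeros
    by fastforce
  from assms(4) consider "x = y" | "y = z" | "x = z"
    by blast
  then show ?thesis
  proof cases
    case 1
    then show ?thesis
      using pair[of y z] assms(3) by auto
  next
    case 2
    then show ?thesis
      using pair[of z x] assms(2,3) by (auto simp: vmul_commute ac_simps)
  next
    case 3
    then show ?thesis
      using pair[of x y] assms(2) by (auto simp: vmul_commute ac_simps)
  qed
qed

theorem lemma4p7:
  fixes A :: "('a::{field,finite} ^ 'n) set"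
    and k q j :: nat
  assumes "k > 0"
    and "q = 3 ^ k"
    and "CARD('a) = q"
    and "j \<le> CARD('n)"
    and "\<forall>x\<in>A. card {i. x $ i = 0} = j"
    and "\<forall>x\<in>A. \<forall>y\<in>A. \<forall>z\<in>A. x \<noteq> y \<and> y \<noteq> z \<and> x \<noteq> z \<longrightarrow>
           vmul x y + vmul y z + vmul z x \<noteq> 0"
  shows "\<forall>x\<in>A. \<forall>y\<in>A. \<forall>z\<in>A. (Ppoly q x y z \<noteq> 0 \<longleftrightarrow> x = y \<and> y = z)"
proof (intro ballI)
  fix x y z
  assume xyz: "x \<in> A" "y \<in> A" "z \<in> A"
  have "CHAR('a) = 3"
    using CHAR_eq_if_card_prime_power[of 3] assms(1-3) by simp
  then have char3: "(3::'a) = 0"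
    by (metis of_nat_CHAR of_nat_numeral)
  have "Ppoly q x y z \<noteq> 0 \<longleftrightarrow> vmul x y + vmul y z + vmul z x = 0"
    using Ppoly_card_neq_0_iff assms(3) by metis
  also have "\<dots> \<longleftrightarrow> x = y \<and> y = z"
  proof (cases "x = y \<or> y = z \<or> x = z")
    case True
    then show ?thesis
      using vmul_cyclic_sum_eq_0_iff_eq[OF char3, of x y z] assms(5) xyz by simp
  next
    case False
    then show ?thesis
      using assms(6) xyz by blast
  qed
  finally show "Ppoly q x y z \<noteq> 0 \<longleftrightarrow> x = y \<and> y = z" .
qed

end
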